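(* Let $\{f_n, n\in\mathbb{N}\}\subset\mathcal{L}$, where $f_n(z)=C_nz^{l_n}e^{\alpha_nz}\prod_{j\ge1}(1+\beta_j(n)z)$, and put $\mu_1(n)=\sum_{j\ge1}\beta_j(n)$. Suppose there exist $a>0$, $C>0$ and $l\in\mathbb{N}_0$ such that for all $n$: $|\alpha_n|+\mu_1(n)\le a$, $|C_n|\le C$, $l_n\le l$. Then $\{f_n\}$ is bounded in $\mathcal{A}_a$, i.e. $\sup_n\|f_n\|_b<\infty$ for every $b>a$.
   Context: $\mathcal{L}$ is the set of entire functions $f(z)=Cz^le^{\alpha z}\prod_{j\ge1}(1+\beta_jz)$ with $C\in\mathbb{C}$, $l\in\mathbb{N}_0$, $\alpha\in\mathbb{R}$, $\beta_j\ge\beta_{j+1}\ge0$, $\sum_j\beta_j<\infty$. For $b>0$, $\|f\|_b=\sup_{k\in\mathbb{N}_0}b^{-k}|f^{(k)}(0)|$; $\mathcal{A}_a$ is the set of entire $f$ with $\|f\|_b<\infty$ for all $b>a$. *)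

theory Defs
  imports "HOL-Analysis.Analysis"
begin

definition L_params :: "(nat \<Rightarrow> real) \<Rightarrow> bool" where
  "L_params beta \<longleftrightarrow> (\<forall>j. beta (Suc j) \<le> beta j \<and> 0 \<le> beta (Suc j)) \<and> summable beta"

text \<open>The function C z^l e^(alpha z) prod_j (1 + beta_j z) (indices j start at 0 here).\<close>
definition Lfun :: "complex \<Rightarrow> nat \<Rightarrow> real \<Rightarrow> (nat \<Rightarrow> real) \<Rightarrow> complex \<Rightarrow> complex" where
  "Lfun c l alpha beta z =
     c * z ^ l * exp (complex_of_real alpha * z) * (\<Prod>j. 1 + complex_of_real (beta j) * z)"

text \<open>The seminorm-type quantity: f is bounded by M in the norm ||.||_b.\<close>
definition bnorm_le :: "real \<Rightarrow> (complex \<Rightarrow> complex) \<Rightarrow> real \<Rightarrow> bool" where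
  "bnorm_le b f M \<longleftrightarrow> (\<forall>k::nat. norm ((deriv ^^ k) f 0) / b ^ k \<le> M)"

end

theory Submission
  imports Defs "HOL-Complex_Analysis.Complex_Analysis"
begin

(* Each f_n satisfies |f_n(z)| <= C max(1,|z|)^L e^(a|z|), because |e^(alpha z)| <= e^(|alpha| |z|)
   and |prod_j (1 + beta_j z)| <= e^(mu_1 |z|).  Cauchy's estimate on the circle of radius
   r = (k+1)/a gives |f_n^(k)(0)| <= k! C max(1,r)^L e^(k+1) (a/(k+1))^k, and the elementary
   bound k! e^k <= e k^(k+1) turns this into C e (1+1/a)^L (k+1)^(L+1) a^k.  After division by
   b^k a polynomial in k times (a/b)^k remains, which is bounded in k when b > a, uniformly in n. *)

lemma norm_prodinf_one_plus_le_exp: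
  fixes u :: "nat \<Rightarrow> 'a :: {real_normed_field, banach}"
  assumes "summable (\<lambda>j. norm (u j))"
  shows "norm (\<Prod>j. 1 + u j) \<le> exp (\<Sum>j. norm (u j))"
proof -
  have "convergent_prod (\<lambda>j. 1 + u j)"
    using assms by (intro abs_convergent_prod_imp_convergent_prod summable_imp_abs_convergent_prod) simp
  then have lim: "(\<lambda>n. norm (\<Prod>j\<le>n. 1 + u j)) \<longlonglongrightarrow> norm (\<Prod>j. 1 + u j)"
    by (intro tendsto_norm convergent_prod_LIMSEQ)
  have partial: "norm (\<Prod>j\<le>n. 1 + u j) \<le> exp (\<Sum>j. norm (u j))" for n
  proof -
    have "norm (\<Prod>j\<le>n. 1 + u j) \<le> (\<Prod>j\<le>n. 1 + norm (u j))"
      unfolding prod_norm[symmetric] by (intro prod_mono) (auto intro: norm_triangle_le)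
    also have "\<dots> \<le> exp (\<Sum>j\<le>n. norm (u j))"
      by (rule prod_le_exp_sum) simp
    also have "\<dots> \<le> exp (\<Sum>j. norm (u j))"
      using assms by (simp add: sum_le_suminf)
    finally show ?thesis .
  qed
  show ?thesis
    by (rule LIMSEQ_le_const2[OF lim]) (use partial in blast)
qed

lemma holomorphic_prodinf_one_plus_mult:
  fixes w :: "nat \<Rightarrow> complex"
  assumes "summable (\<lambda>j. norm (w j))"
  shows "(\<lambda>z. \<Prod>j. 1 + w j * z) holomorphic_on UNIV"
proof (rule holomorphic_uniform_sequence[where f = "\<lambda>n z. \<Prod>j<n. 1 + w j * z"])
  fix x :: complex
  have "uniformly_convergent_on (cball x 1) (\<lambda>n z. \<Prod>j<n. 1 + w j * z)"
  proof (rule uniformly_convergent_on_prod)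
    show "uniformly_convergent_on (cball x 1) (\<lambda>N z. \<Sum>j<N. norm (w j * z))"
    proof (rule Weierstrass_m_test'[where M = "\<lambda>j. norm (w j) * (norm x + 1)"])
      fix j and z :: complex
      assume "z \<in> cball x 1"
      then have "norm z \<le> norm x + 1"
        using norm_triangle_ineq2[of z x] by (simp add: dist_norm norm_minus_commute)
      then show "norm (norm (w j * z)) \<le> norm (w j) * (norm x + 1)"
        by (simp add: norm_mult mult_left_mono)
    qed (intro summable_mult2 assms)
  qed (auto intro!: continuous_intros)
  then have "uniform_limit (cball x 1) (\<lambda>n z. \<Prod>j<n. 1 + w j * z)
      (\<lambda>z. lim (\<lambda>n. \<Prod>j<n. 1 + w j * z)) sequentially"
    using uniformly_convergent_uniform_limit_iff by blast
  moreover have "lim (\<lambda>n. \<Prod>j<n. 1 + w j * z) = (\<Prod>j. 1 + w j * z)" for z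
  proof -
    have "convergent_prod (\<lambda>j. 1 + w j * z)"
      using summable_mult2[OF assms, of "norm z"]
      by (intro abs_convergent_prod_imp_convergent_prod summable_imp_abs_convergent_prod)
         (simp add: norm_mult)
    then show ?thesis
      using convergent_prod_LIMSEQ LIMSEQ_lessThan_iff_atMost limI by blast
  qed
  ultimately show "\<exists>d>0. cball x d \<subseteq> UNIV \<and>
      uniform_limit (cball x d) (\<lambda>n z. \<Prod>j<n. 1 + w j * z) (\<lambda>z. \<Prod>j. 1 + w j * z) sequentially"
    by (intro exI[of _ 1]) auto
qed (auto intro!: holomorphic_intros)

lemma exp_one_le_one_plus_inverse_power:
  assumes "n \<ge> 1"
  shows "exp 1 \<le> (1 + 1 / real n) ^ Suc n"
proof -
  have n: "real n > 0" using assms by simp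
  have "1 - 1 / real (Suc n) \<le> exp (- (1 / real (Suc n)))"
    using exp_ge_add_one_self[of "- (1 / real (Suc n))"] by simp
  then have "exp (1 / real (Suc n)) \<le> 1 + 1 / real n"
    using n by (simp add: exp_minus field_simps)
  then have "exp (1 / real (Suc n)) ^ Suc n \<le> (1 + 1 / real n) ^ Suc n"
    by (rule power_mono) simp
  also have "exp (1 / real (Suc n)) ^ Suc n = exp 1"
    by (subst exp_of_nat_mult[symmetric]) simp
  finally show ?thesis .
qed

lemma fact_times_exp_le:
  assumes "n \<ge> 1"
  shows "fact n * exp (real n) \<le> exp 1 * real n ^ Suc n"
  using assms
proof (induction n rule: dec_induct)
  case (step n)
  have "fact (Suc n) * exp (real (Suc n)) = real (Suc n) * exp 1 * (fact n * exp (real n))"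
    by (simp add: exp_add algebra_simps)
  also have "\<dots> \<le> real (Suc n) * (exp 1 * (exp 1 * real n ^ Suc n))"
    using step.IH by (simp add: mult_left_mono)
  also have "exp 1 * real n ^ Suc n \<le> real (Suc n) ^ Suc n"
    using exp_one_le_one_plus_inverse_power[OF step.hyps(1)] step.hyps(1)
    by (simp add: field_simps power_divide)
  finally show ?case
    by (simp add: mult_left_mono)
qed simp

lemma polynomial_times_geometric_bounded:
  fixes q :: real
  assumes "0 \<le> q" "q < 1"
  shows "\<exists>G. \<forall>k. (real k + 1) ^ m * q ^ k \<le> G"
proof (cases "m = 0")
  case True
  then show ?thesis
    using assms by (intro exI[of _ 1]) (simp add: power_le_one)
next
  case False
  define p where "p = root m q"
  have p: "0 \<le> p" "p < 1" "p ^ m = q"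
    using assms False by (simp_all add: p_def real_root_pow_pos2)
  have "Bseq (\<lambda>k. of_nat k * p ^ k)"
    using p by (intro convergent_imp_Bseq convergentI[OF powser_times_n_limit_0]) simp
  then obtain K where K: "\<And>k. real k * p ^ k \<le> K"
    using p by (auto simp: Bseq_def)
  have "(real k + 1) ^ m * q ^ k \<le> (K + 1) ^ m" for k
  proof -
    have "(real k + 1) * p ^ k \<le> K + 1"
      using K[of k] power_le_one[of p k] p by (simp add: distrib_right)
    then have "((real k + 1) * p ^ k) ^ m \<le> (K + 1) ^ m"
      using p by (intro power_mono) simp_all
    then show ?thesis
      using p by (simp add: power_mult_distrib power_mult[symmetric] mult.commute[of k m] power_mult)
  qed
  then show ?thesis by blast
qed

lemma L_params_norm_weights:
  assumes "L_params beta"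
  shows "(\<lambda>j. norm (complex_of_real (beta j))) = beta"
proof
  fix j
  have "0 \<le> beta j"
    using assms unfolding L_params_def by (cases j) (auto intro: order_trans)
  then show "norm (complex_of_real (beta j)) = beta j"
    by simp
qed

lemma Lfun_holomorphic:
  assumes "L_params beta"
  shows "Lfun c l alpha beta holomorphic_on UNIV"
proof -
  have "summable (\<lambda>j. norm (complex_of_real (beta j)))"
    by (subst L_params_norm_weights[OF assms]) (use assms in \<open>simp add: L_params_def\<close>)
  then show ?thesis
    unfolding Lfun_def[abs_def] by (intro holomorphic_intros holomorphic_prodinf_one_plus_mult)
qed

lemma norm_Lfun_le:
  assumes "L_params beta"
  shows "norm (Lfun c l alpha beta z)
    \<le> norm c * norm z ^ l * exp ((\<bar>alpha\<bar> + (\<Sum>j. beta j)) * norm z)"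
proof -
  have "alpha * Re z \<le> \<bar>alpha\<bar> * norm z"
    by (metis abs_Re_le_cmod abs_ge_self abs_mult abs_ge_zero mult_left_mono order_trans)
  then have exp_le: "norm (exp (complex_of_real alpha * z)) \<le> exp (\<bar>alpha\<bar> * norm z)"
    by simp
  have weights: "norm (complex_of_real (beta j) * z) = beta j * norm z" for j
    using fun_cong[OF L_params_norm_weights[OF assms], of j] by (simp add: norm_mult)
  have summable: "summable beta"
    using assms by (simp add: L_params_def)
  have "norm (\<Prod>j. 1 + complex_of_real (beta j) * z) \<le> exp (\<Sum>j. beta j * norm z)"
    using norm_prodinf_one_plus_le_exp[of "\<lambda>j. complex_of_real (beta j) * z"] summable
    by (simp add: weights summable_mult2)
  also have "(\<Sum>j. beta j * norm z) = (\<Sum>j. beta j) * norm z"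
    using summable by (rule suminf_mult2[symmetric])
  finally have prod_le: "norm (\<Prod>j. 1 + complex_of_real (beta j) * z) \<le> exp ((\<Sum>j. beta j) * norm z)" .
  have "norm (Lfun c l alpha beta z) = norm c * norm z ^ l * norm (exp (complex_of_real alpha * z))
      * norm (\<Prod>j. 1 + complex_of_real (beta j) * z)"
    by (simp add: Lfun_def norm_mult norm_power)
  also have "\<dots> \<le> norm c * norm z ^ l * exp (\<bar>alpha\<bar> * norm z) * exp ((\<Sum>j. beta j) * norm z)"
    by (intro mult_mono mult_left_mono exp_le prod_le) simp_all
  finally show ?thesis
    by (simp add: distrib_right exp_add mult.assoc)
qed

lemma Lfun_higher_deriv_Cauchy_bound:
  assumes "L_params beta" "\<bar>alpha\<bar> + (\<Sum>j. beta j) \<le> a" "norm c \<le> C" "l \<le> L" "r > 0"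
  shows "norm ((deriv ^^ k) (Lfun c l alpha beta) 0) \<le> fact k * (C * max 1 r ^ L * exp (a * r)) / r ^ k"
proof (rule Cauchy_inequality)
  show "Lfun c l alpha beta holomorphic_on ball 0 r"
    using Lfun_holomorphic[OF assms(1)] by (rule holomorphic_on_subset) simp
  show "continuous_on (cball 0 r) (Lfun c l alpha beta)"
    using Lfun_holomorphic[OF assms(1)] holomorphic_on_imp_continuous_on continuous_on_subset
    by blast
  fix z :: complex
  assume "norm (0 - z) = r"
  then have z: "norm z = r" by simp
  have C: "C \<ge> 0"
    using assms(3) norm_ge_zero order_trans by blast
  have "norm z ^ l \<le> max 1 r ^ L"
    using z assms(4,5) by (metis max.cobounded1 max.cobounded2 order_trans power_increasing power_mono norm_ge_zero)
  moreover have "exp ((\<bar>alpha\<bar> + (\<Sum>j. beta j)) * norm z) \<le> exp (a * r)"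
    using z assms(2,5) by (simp add: mult_right_mono)
  ultimately have "norm c * norm z ^ l * exp ((\<bar>alpha\<bar> + (\<Sum>j. beta j)) * norm z) \<le> C * max 1 r ^ L * exp (a * r)"
    using assms(3) C by (intro mult_mono) simp_all
  then show "norm (Lfun c l alpha beta z) \<le> C * max 1 r ^ L * exp (a * r)"
    using norm_Lfun_le[OF assms(1)] order_trans by blast
qed (fact assms(5))

lemma Lfun_higher_deriv_bound:
  assumes "L_params beta" "\<bar>alpha\<bar> + (\<Sum>j. beta j) \<le> a" "norm c \<le> C" "l \<le> L" "a > 0"
  shows "norm ((deriv ^^ k) (Lfun c l alpha beta) 0)
    \<le> C * exp 1 * (1 + 1 / a) ^ L * (real k + 1) ^ Suc L * a ^ k"
proof -
  define r where "r = (real k + 1) / a"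
  have r: "r > 0" "a * r = real (Suc k)" "r ^ k = real (Suc k) ^ k / a ^ k"
    using assms(5) by (simp_all add: r_def power_divide add.commute)
  have C: "C \<ge> 0"
    using assms(3) norm_ge_zero order_trans by blast
  have "norm ((deriv ^^ k) (Lfun c l alpha beta) 0) \<le> fact k * (C * max 1 r ^ L * exp (a * r)) / r ^ k"
    by (rule Lfun_higher_deriv_Cauchy_bound[OF assms(1-4) r(1)])
  also have "\<dots> = C * max 1 r ^ L * a ^ k * (fact (Suc k) * exp (real (Suc k)) / real (Suc k) ^ Suc k)"
    using assms(5) r(2,3) by (simp add: fact_Suc del: of_nat_Suc)
  also have "\<dots> \<le> C * max 1 r ^ L * a ^ k * (exp 1 * real (Suc k))"
  proof -
    have "fact (Suc k) * exp (real (Suc k)) / real (Suc k) ^ Suc k \<le> exp 1 * real (Suc k)"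
      using fact_times_exp_le[of "Suc k"]
      by (simp add: pos_divide_le_eq mult_ac del: of_nat_Suc power_Suc) (simp add: mult_ac)
    then show ?thesis
      using C assms(5) by (intro mult_left_mono) simp_all
  qed
  also have "max 1 r ^ L \<le> ((real k + 1) * (1 + 1 / a)) ^ L"
    using assms(5) by (intro power_mono) (auto simp: r_def field_simps)
  finally show ?thesis
    using C assms(5) by (simp add: power_mult_distrib mult_ac mult_left_mono mult_right_mono add.commute)
qed

theorem proposition1p3:
  fixes c :: "nat \<Rightarrow> complex" and l :: "nat \<Rightarrow> nat" and alpha :: "nat \<Rightarrow> real"
    and beta :: "nat \<Rightarrow> nat \<Rightarrow> real" and a C :: real and L :: nat
  assumes params: "\<And>n. L_params (beta n)"
    and a_pos: "a > 0" and C_pos: "C > 0"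
    and bound_exp: "\<And>n. \<bar>alpha n\<bar> + (\<Sum>j. beta n j) \<le> a"
    and bound_C: "\<And>n. norm (c n) \<le> C"
    and bound_l: "\<And>n. l n \<le> L"
  shows "\<forall>b > a. \<exists>M. \<forall>n. bnorm_le b (Lfun (c n) (l n) (alpha n) (beta n)) M"
proof (intro allI impI)
  fix b
  assume "b > a"
  then obtain G where G: "\<And>k. (real k + 1) ^ Suc L * (a / b) ^ k \<le> G"
    using polynomial_times_geometric_bounded[of "a / b" "Suc L"] a_pos by auto
  have "bnorm_le b (Lfun (c n) (l n) (alpha n) (beta n)) (C * exp 1 * (1 + 1 / a) ^ L * G)" for n
    unfolding bnorm_le_def
  proof
    fix k
    have "norm ((deriv ^^ k) (Lfun (c n) (l n) (alpha n) (beta n)) 0) / b ^ k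
        \<le> C * exp 1 * (1 + 1 / a) ^ L * (real k + 1) ^ Suc L * a ^ k / b ^ k"
      using Lfun_higher_deriv_bound[OF params bound_exp bound_C bound_l a_pos] \<open>b > a\<close> a_pos
      by (intro divide_right_mono) simp_all
    also have "\<dots> = C * exp 1 * (1 + 1 / a) ^ L * ((real k + 1) ^ Suc L * (a / b) ^ k)"
      by (simp add: power_divide)
    also have "\<dots> \<le> C * exp 1 * (1 + 1 / a) ^ L * G"
      using G C_pos a_pos by (intro mult_left_mono) simp_all
    finally show "norm ((deriv ^^ k) (Lfun (c n) (l n) (alpha n) (beta n)) 0) / b ^ k
        \<le> C * exp 1 * (1 + 1 / a) ^ L * G" .
  qed
  then show "\<exists>M. \<forall>n. bnorm_le b (Lfun (c n) (l n) (alpha n) (beta n)) M"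
    by blast
qed

end
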